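(* Let $\mathbb L$ be an unobstructed combinatorially indecomposable tropical Lagrangian multi-section of rank $r$ over a complete fan $\Sigma$ in $N_{\mathbb R}\cong\mathbb R^n$, with $\mathbb C^\times$-local system $\mathcal L$ on $L\setminus L^{(n-2)}$ and consistent collection of wall-crossing automorphisms $\Theta$. For any $\mathbb C^\times$-local system $\mathcal L'$ on $L\setminus L^{(n-2)}$ isomorphic to $\mathcal L$, there is a consistent collection $\Theta'$ for $(\mathbb L,\mathcal L')$ and an isomorphism of toric vector bundles $\mathcal E(\mathbb L,\mathcal L,\Theta)\cong\mathcal E(\mathbb L,\mathcal L',\Theta')$.
   Context: $N$ lattice of rank $n$, $M=\mathrm{Hom}(N,\mathbb Z)$, $\Sigma(k)$ the $k$-dimensional cones, $\sigma^\vee$ dual cones, $U(\sigma)=\mathrm{Spec}\,\mathbb C[\sigma^\vee\cap M]$, $z^m$ monomials, $X_\Sigma$ the toric variety with torus $T=(\mathbb C^\times)^n$. $\mathbb L=(L,\Sigma_L,\mu,\pi,\varphi)$ is a tropical Lagrangian multi-section: a cone complex $L$ (finite union of closed rational polyhedral cones glued along faces), weights $\mu$, a branched covering $\pi$ onto $(N_{\mathbb R},\Sigma)$ mapping cones homeomorphically onto cones with weighted fibre count $r$, and $\varphi$ continuous, integral linear on cones; $m(\sigma')\in M$ its slope on a maximal cone; $\sigma^{(1)},\dots,\sigma^{(r)}$ the lifts of $\sigma\in\Sigma(n)$ with multiplicity; $L^{(k)}$ the union of cones of dimension $\le k$. Being combinatorially indecomposable, $\mathbb L$ is $(n-1)$-separable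 and unramified outside $L^{(n-2)}$; for adjacent $\sigma_1,\sigma_2\in\Sigma(n)$ each lift $\sigma_1^{(\alpha)}$ determines a unique lift $\sigma_2^{(\beta)}$ with $\sigma_1^{(\alpha)}\cap\sigma_2^{(\beta)}$ of dimension $n-1$. A $\mathbb C^\times$-local system on $L\setminus L^{(n-2)}$ is represented by constants $g^{sf}_{\sigma_1^{(\alpha)}\sigma_2^{(\beta)}}\in\mathbb C^\times$ on such adjacent pairs. $\mathcal E_\sigma$ is the trivial rank $r$ bundle on $U(\sigma)$ with frame $1(\sigma^{(\alpha)})$ of torus weight $m(\sigma^{(\alpha)})$. $G^{sf}_{\sigma_1\sigma_2}:1(\sigma_1^{(\alpha)})\mapsto g^{sf}_{\sigma_1^{(\alpha)}\sigma_2^{(\beta)}}z^{m(\sigma_1^{(\alpha)})-m(\sigma_2^{(\beta)})}1(\sigma_2^{(\beta)})$. For $\tau=\sigma_1\cap\sigma_2\in\Sigma(n-1)$ and a cone $\omega'$ of $L$, $N_\tau(\omega')$ is the endomorphism of $\mathcal E_{\sigma_1}|_{U(\tau)}$ with $(\alpha,\beta)$-entry $n^{(\alpha\beta)}_\tau(\omega')z^{m(\sigma_1^{(\alpha)})-m(\sigma_1^{(\beta)})}$ ($n$'s arbitrary complex constants) if $\omega'\subset\sigma_1^{(\alpha)}\cap\sigma_1^{(\beta)}$, $\alpha\ne\beta$, $m(\sigma_1^{(\alpha)})-m(\sigma_1^{(\beta)})\in\tau^\vee\cap M$, and $0$ otherwise; $S'_\tau=\{\sigma_1^{(\alpha)}\cap\sigma_1^{(\beta)}:m(\sigma_1^{(\alpha)})-m(\sigma_1^{(\beta)})\in\tau^\vee\cap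 M\}$; $\Theta_{\sigma_1\sigma_2}=\Theta_\tau=\prod_{\omega'\in S'_\tau}\exp N_\tau(\omega')$; $\Theta$ the collection of these; $G_{\sigma_1\sigma_2}=G^{sf}_{\sigma_1\sigma_2}\circ\Theta_{\sigma_1\sigma_2}$ on $U(\tau)$ (with $G_{\sigma_2\sigma_1}=G_{\sigma_1\sigma_2}^{-1}$). $\Theta$ is consistent if for every $\omega\in\Sigma$ and every cycle $\sigma_1,\dots,\sigma_{l+1}=\sigma_1$ of maximal cones containing $\omega$ with consecutive ones sharing an $(n-1)$-dimensional cone, $G_{\sigma_l\sigma_{l+1}}|_{U(\omega)}\circ\cdots\circ G_{\sigma_1\sigma_2}|_{U(\omega)}=\mathrm{Id}$. $\mathbb L$ is unobstructed if some $\mathcal L$ and consistent $\Theta$ exist. Then for arbitrary $\sigma_1,\sigma_2\in\Sigma(n)$, $G_{\sigma_1\sigma_2}$ on $U(\sigma_1\cap\sigma_2)$ is the composition of the $G$'s along any chain of maximal cones containing $\sigma_1\cap\sigma_2$ from $\sigma_1$ to $\sigma_2$ with consecutive ones sharing an $(n-1)$-cone; these form a cocycle, and $\mathcal E(\mathbb L,\mathcal L,\Theta)$ is the resulting toric vector bundle on $X_\Sigma$. *)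

theory Defs
  imports "HOL-Analysis.Analysis"
begin

text \<open>N = int^'n, M = Hom(N,Z) = int^'n (via the standard pairing), N_R = real^'n.\<close>

definition rvec :: "int^'n \<Rightarrow> real^'n" where
  "rvec v = (\<chi> i. of_int (v$i))"

definition pairing :: "int^'n \<Rightarrow> real^'n \<Rightarrow> real" where
  "pairing m x = (\<Sum>i\<in>UNIV. of_int (m$i) * x$i)"

definition cone_gen :: "(int^'n) set \<Rightarrow> (real^'n) set" where
  "cone_gen V = {x. \<exists>a. (\<forall>v\<in>V. a v \<ge> 0) \<and> x = (\<Sum>v\<in>V. a v *\<^sub>R rvec v)}"

definition rat_poly_cone :: "(real^'n) set \<Rightarrow> bool" where
  "rat_poly_cone \<sigma> \<longleftrightarrow> (\<exists>V. finite V \<and> \<sigma> = cone_gen V)"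

definition strongly_convex :: "(real^'n) set \<Rightarrow> bool" where
  "strongly_convex \<sigma> \<longleftrightarrow> \<sigma> \<inter> uminus ` \<sigma> = {0}"

definition fan :: "(real^'n) set set \<Rightarrow> bool" where
  "fan \<Sigma> \<longleftrightarrow> finite \<Sigma> \<and> \<Sigma> \<noteq> {} \<and>
     (\<forall>\<sigma>\<in>\<Sigma>. rat_poly_cone \<sigma> \<and> strongly_convex \<sigma>) \<and>
     (\<forall>\<sigma>\<in>\<Sigma>. \<forall>F. F face_of \<sigma> \<and> F \<noteq> {} \<longrightarrow> F \<in> \<Sigma>) \<and>
     (\<forall>\<sigma>\<in>\<Sigma>. \<forall>\<tau>\<in>\<Sigma>. (\<sigma> \<inter> \<tau>) face_of \<sigma> \<and> (\<sigma> \<inter> \<tau>) face_of \<tau>)"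

definition complete_fan :: "(real^'n) set set \<Rightarrow> bool" where
  "complete_fan \<Sigma> \<longleftrightarrow> fan \<Sigma> \<and> \<Union>\<Sigma> = UNIV"

definition cones_dim :: "(real^'n) set set \<Rightarrow> int \<Rightarrow> (real^'n) set set" where
  "cones_dim \<Sigma> k = {\<sigma>\<in>\<Sigma>. aff_dim \<sigma> = k}"

definition adjacent :: "(real^'n) set set \<Rightarrow> (real^'n) set \<Rightarrow> (real^'n) set \<Rightarrow> bool" where
  "adjacent \<Sigma> \<sigma>1 \<sigma>2 \<longleftrightarrow> \<sigma>1 \<in> cones_dim \<Sigma> (int CARD('n)) \<and> \<sigma>2 \<in> cones_dim \<Sigma> (int CARD('n))
      \<and> aff_dim (\<sigma>1 \<inter> \<sigma>2) = int CARD('n) - 1"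

definition dualM :: "(real^'n) set \<Rightarrow> (int^'n) set" where
  "dualM \<sigma> = {m. \<forall>x\<in>\<sigma>. pairing m x \<ge> 0}"

definition torus :: "(complex^'n) set" where
  "torus = {t. \<forall>i. t$i \<noteq> 0}"

definition zmon :: "int^'n \<Rightarrow> complex^'n \<Rightarrow> complex" where
  "zmon m t = (\<Prod>i\<in>UNIV. (t$i) powi (m$i))"

text \<open>A function on T that extends to a regular function on U(\<sigma>), i.e. lies in C[\<sigma>^\<or> \<inter> M].\<close>
definition regular_on :: "(real^'n) set \<Rightarrow> (complex^'n \<Rightarrow> complex) \<Rightarrow> bool" where
  "regular_on \<sigma> f \<longleftrightarrow> (\<exists>F c. finite F \<and> F \<subseteq> dualM \<sigma> \<and>
       (\<forall>t\<in>torus. f t = (\<Sum>m\<in>F. c m * zmon m t)))"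

text \<open>Points of L have type 'p; cones of L are subsets of points. lift \<sigma> \<alpha> (\<alpha> :: 'r, r = CARD('r))
  enumerates the lifts of \<sigma> with multiplicity; adjl \<sigma>1 \<sigma>2 \<alpha> is the index \<beta> determined by \<alpha>.\<close>
record ('p, 'n, 'r) tlms =
  Lcones :: "'p set set"
  proj :: "'p \<Rightarrow> real^'n"
  mult :: "'p set \<Rightarrow> nat"
  phi :: "'p \<Rightarrow> real"
  lift :: "(real^'n) set \<Rightarrow> 'r \<Rightarrow> 'p set"
  adjl :: "(real^'n) set \<Rightarrow> (real^'n) set \<Rightarrow> 'r \<Rightarrow> 'r"

definition dimL :: "('p, 'n::finite, 'r) tlms \<Rightarrow> 'p set \<Rightarrow> int" where
  "dimL L A = aff_dim (proj L ` A)"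

definition maxcones :: "('p, 'n::finite, 'r) tlms \<Rightarrow> 'p set set" where
  "maxcones L = {A\<in>Lcones L. dimL L A = int CARD('n)}"

definition slope :: "('p, 'n::finite, 'r) tlms \<Rightarrow> 'p set \<Rightarrow> int^'n" where
  "slope L A = (SOME m. \<forall>x\<in>A. phi L x = pairing m (proj L x))"

definition tropical_lagrangian_multisection ::
  "(real^'n::finite) set set \<Rightarrow> ('p, 'n, 'r::finite) tlms \<Rightarrow> bool" where
  "tropical_lagrangian_multisection \<Sigma> L \<longleftrightarrow>
     complete_fan \<Sigma> \<and> finite (Lcones L) \<and>
     (\<forall>A\<in>Lcones L. inj_on (proj L) A \<and> proj L ` A \<in> \<Sigma>) \<and>
     (\<forall>A\<in>Lcones L. \<forall>F. F face_of (proj L ` A) \<and> F \<noteq> {} \<longrightarrow> A \<inter> proj L -` F \<in> Lcones L) \<and>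
     (\<forall>A\<in>Lcones L. \<forall>B\<in>Lcones L. A \<inter> B = {} \<or>
         (A \<inter> B \<in> Lcones L \<and> proj L ` (A \<inter> B) face_of proj L ` A)) \<and>
     (\<forall>A\<in>maxcones L. mult L A \<ge> 1) \<and>
     (\<forall>\<sigma>\<in>cones_dim \<Sigma> (int CARD('n)).
         (\<Sum>A\<in>{A\<in>maxcones L. proj L ` A = \<sigma>}. mult L A) = CARD('r)) \<and>
     (\<forall>A\<in>Lcones L. \<exists>m. \<forall>x\<in>A. phi L x = pairing m (proj L x)) \<and>
     (\<forall>\<sigma>\<in>cones_dim \<Sigma> (int CARD('n)). \<forall>\<alpha>.
         lift L \<sigma> \<alpha> \<in> maxcones L \<and> proj L ` lift L \<sigma> \<alpha> = \<sigma>) \<and>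
     (\<forall>\<sigma>\<in>cones_dim \<Sigma> (int CARD('n)). \<forall>A\<in>maxcones L.
         proj L ` A = \<sigma> \<longrightarrow> card {\<alpha>. lift L \<sigma> \<alpha> = A} = mult L A)"

definition adjL :: "(real^'n::finite) set set \<Rightarrow> ('p, 'n, 'r) tlms \<Rightarrow> 'p set \<Rightarrow> 'p set \<Rightarrow> bool" where
  "adjL \<Sigma> L A B \<longleftrightarrow> A \<in> maxcones L \<and> B \<in> maxcones L \<and>
     adjacent \<Sigma> (proj L ` A) (proj L ` B) \<and> dimL L (A \<inter> B) = int CARD('n) - 1"

text \<open>Stated consequence of combinatorial indecomposability: each lift of \<sigma>1 determines a unique
  lift of an adjacent \<sigma>2 meeting it in codimension one (adjl realises this on indices).\<close>
definition unique_adjacent_lifts :: "(real^'n::finite) set set \<Rightarrow> ('p, 'n, 'r) tlms \<Rightarrow> bool" where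
  "unique_adjacent_lifts \<Sigma> L \<longleftrightarrow> (\<forall>\<sigma>1 \<sigma>2. adjacent \<Sigma> \<sigma>1 \<sigma>2 \<longrightarrow> (\<forall>\<alpha>.
      adjL \<Sigma> L (lift L \<sigma>1 \<alpha>) (lift L \<sigma>2 (adjl L \<sigma>1 \<sigma>2 \<alpha>)) \<and>
      adjl L \<sigma>2 \<sigma>1 (adjl L \<sigma>1 \<sigma>2 \<alpha>) = \<alpha> \<and>
      (\<forall>B\<in>maxcones L. proj L ` B = \<sigma>2 \<and> adjL \<Sigma> L (lift L \<sigma>1 \<alpha>) B
           \<longrightarrow> B = lift L \<sigma>2 (adjl L \<sigma>1 \<sigma>2 \<alpha>))))"

definition loc_sys :: "(real^'n::finite) set set \<Rightarrow> ('p, 'n, 'r) tlms \<Rightarrow> ('p set \<Rightarrow> 'p set \<Rightarrow> complex) \<Rightarrow> bool" where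
  "loc_sys \<Sigma> L g \<longleftrightarrow> (\<forall>A B. adjL \<Sigma> L A B \<longrightarrow> g A B \<noteq> 0 \<and> g B A = inverse (g A B))"

definition iso_loc_sys :: "(real^'n::finite) set set \<Rightarrow> ('p, 'n, 'r) tlms \<Rightarrow>
    ('p set \<Rightarrow> 'p set \<Rightarrow> complex) \<Rightarrow> ('p set \<Rightarrow> 'p set \<Rightarrow> complex) \<Rightarrow> bool" where
  "iso_loc_sys \<Sigma> L g g' \<longleftrightarrow> (\<exists>h. (\<forall>A\<in>maxcones L. h A \<noteq> 0) \<and>
      (\<forall>A B. adjL \<Sigma> L A B \<longrightarrow> g' A B = h B * g A B / h A))"

text \<open>Convention: a bundle map is recorded at a torus point t by the matrix X with
  X $ \<alpha> $ \<beta> = coefficient of the target frame element \<beta> in the image of source frame element \<alpha>.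
  Hence "first A, then B" is the matrix A ** B.\<close>

definition Gsf :: "('p, 'n::finite, 'r::finite) tlms \<Rightarrow> ('p set \<Rightarrow> 'p set \<Rightarrow> complex) \<Rightarrow>
    (real^'n) set \<Rightarrow> (real^'n) set \<Rightarrow> complex^'n \<Rightarrow> complex^'r^'r" where
  "Gsf L g \<sigma>1 \<sigma>2 t = (\<chi> \<alpha> \<beta>. if \<beta> = adjl L \<sigma>1 \<sigma>2 \<alpha>
      then g (lift L \<sigma>1 \<alpha>) (lift L \<sigma>2 \<beta>) * zmon (slope L (lift L \<sigma>1 \<alpha>) - slope L (lift L \<sigma>2 \<beta>)) t
      else 0)"

definition Nmat :: "('p, 'n::finite, 'r::finite) tlms \<Rightarrow> (real^'n) set \<Rightarrow> (real^'n) set \<Rightarrow> 'p set \<Rightarrow>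
    ('r \<Rightarrow> 'r \<Rightarrow> complex) \<Rightarrow> complex^'n \<Rightarrow> complex^'r^'r" where
  "Nmat L \<sigma>1 \<tau> \<omega> c t = (\<chi> \<alpha> \<beta>.
      if \<alpha> \<noteq> \<beta> \<and> \<omega> \<subseteq> lift L \<sigma>1 \<alpha> \<inter> lift L \<sigma>1 \<beta> \<and>
         slope L (lift L \<sigma>1 \<alpha>) - slope L (lift L \<sigma>1 \<beta>) \<in> dualM \<tau>
      then c \<alpha> \<beta> * zmon (slope L (lift L \<sigma>1 \<alpha>) - slope L (lift L \<sigma>1 \<beta>)) t else 0)"

definition Sset :: "('p, 'n::finite, 'r::finite) tlms \<Rightarrow> (real^'n) set \<Rightarrow> (real^'n) set \<Rightarrow> 'p set set" where
  "Sset L \<sigma>1 \<tau> = {lift L \<sigma>1 \<alpha> \<inter> lift L \<sigma>1 \<beta> | \<alpha> \<beta>.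
      slope L (lift L \<sigma>1 \<alpha>) - slope L (lift L \<sigma>1 \<beta>) \<in> dualM \<tau>}"

definition matexp :: "complex^'r^'r \<Rightarrow> complex^'r^'r" where
  "matexp A = (\<Sum>k. (1 / fact k) *\<^sub>R (((\<lambda>B. A ** B) ^^ k) (mat 1)))"

definition wall_aut :: "('p, 'n::finite, 'r::finite) tlms \<Rightarrow> (real^'n) set \<Rightarrow> (real^'n) set \<Rightarrow>
    (complex^'n \<Rightarrow> complex^'r^'r) \<Rightarrow> bool" where
  "wall_aut L \<sigma>1 \<sigma>2 Th \<longleftrightarrow> (\<exists>ws c. distinct ws \<and> set ws = Sset L \<sigma>1 (\<sigma>1 \<inter> \<sigma>2) \<and>
      (\<forall>t\<in>torus. Th t = foldr (\<lambda>\<omega> X. matexp (Nmat L \<sigma>1 (\<sigma>1 \<inter> \<sigma>2) \<omega> (c \<omega>) t) ** X) ws (mat 1)))"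

definition Gmat :: "('p, 'n::finite, 'r::finite) tlms \<Rightarrow> ('p set \<Rightarrow> 'p set \<Rightarrow> complex) \<Rightarrow>
    ((real^'n) set \<Rightarrow> (real^'n) set \<Rightarrow> complex^'n \<Rightarrow> complex^'r^'r) \<Rightarrow>
    (real^'n) set \<Rightarrow> (real^'n) set \<Rightarrow> complex^'n \<Rightarrow> complex^'r^'r" where
  "Gmat L g Th \<sigma>1 \<sigma>2 t = Th \<sigma>1 \<sigma>2 t ** Gsf L g \<sigma>1 \<sigma>2 t"

definition wall_collection :: "(real^'n::finite) set set \<Rightarrow> ('p, 'n, 'r::finite) tlms \<Rightarrow>
    ('p set \<Rightarrow> 'p set \<Rightarrow> complex) \<Rightarrow>
    ((real^'n) set \<Rightarrow> (real^'n) set \<Rightarrow> complex^'n \<Rightarrow> complex^'r^'r) \<Rightarrow> bool" where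
  "wall_collection \<Sigma> L g Th \<longleftrightarrow> (\<forall>\<sigma>1 \<sigma>2. adjacent \<Sigma> \<sigma>1 \<sigma>2 \<longrightarrow>
      (wall_aut L \<sigma>1 \<sigma>2 (Th \<sigma>1 \<sigma>2) \<or> wall_aut L \<sigma>2 \<sigma>1 (Th \<sigma>2 \<sigma>1)) \<and>
      (\<forall>t\<in>torus. Gmat L g Th \<sigma>1 \<sigma>2 t ** Gmat L g Th \<sigma>2 \<sigma>1 t = mat 1))"

fun chainG :: "((real^'n) set \<Rightarrow> (real^'n) set \<Rightarrow> complex^'n \<Rightarrow> complex^'r^'r) \<Rightarrow>
    (real^'n) set list \<Rightarrow> complex^'n \<Rightarrow> complex^'r^'r" where
  "chainG G (a # b # cs) t = G a b t ** chainG G (b # cs) t"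
| "chainG G _ t = mat 1"

definition is_chain :: "(real^'n::finite) set set \<Rightarrow> (real^'n) set \<Rightarrow> (real^'n) set list \<Rightarrow> bool" where
  "is_chain \<Sigma> \<omega> cs \<longleftrightarrow> cs \<noteq> [] \<and> (\<forall>\<sigma>\<in>set cs. \<sigma> \<in> cones_dim \<Sigma> (int CARD('n)) \<and> \<omega> \<subseteq> \<sigma>) \<and>
      (\<forall>i. i + 1 < length cs \<longrightarrow> adjacent \<Sigma> (cs ! i) (cs ! (i + 1)))"

definition consistent :: "(real^'n::finite) set set \<Rightarrow> ('p, 'n, 'r::finite) tlms \<Rightarrow>
    ('p set \<Rightarrow> 'p set \<Rightarrow> complex) \<Rightarrow>
    ((real^'n) set \<Rightarrow> (real^'n) set \<Rightarrow> complex^'n \<Rightarrow> complex^'r^'r) \<Rightarrow> bool" where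
  "consistent \<Sigma> L g Th \<longleftrightarrow> wall_collection \<Sigma> L g Th \<and>
     (\<forall>\<omega>\<in>\<Sigma>. \<forall>cs. is_chain \<Sigma> \<omega> cs \<and> hd cs = last cs \<longrightarrow>
        (\<forall>t\<in>torus. chainG (Gmat L g Th) cs t = mat 1))"

definition Gfull :: "(real^'n::finite) set set \<Rightarrow> ('p, 'n, 'r::finite) tlms \<Rightarrow>
    ('p set \<Rightarrow> 'p set \<Rightarrow> complex) \<Rightarrow>
    ((real^'n) set \<Rightarrow> (real^'n) set \<Rightarrow> complex^'n \<Rightarrow> complex^'r^'r) \<Rightarrow>
    (real^'n) set \<Rightarrow> (real^'n) set \<Rightarrow> complex^'n \<Rightarrow> complex^'r^'r" where
  "Gfull \<Sigma> L g Th \<sigma>1 \<sigma>2 = chainG (Gmat L g Th)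
      (SOME cs. is_chain \<Sigma> (\<sigma>1 \<inter> \<sigma>2) cs \<and> hd cs = \<sigma>1 \<and> last cs = \<sigma>2)"

text \<open>Isomorphism of the toric vector bundles E(L,g,Th) and E(L,g',Th'): on each U(\<sigma>) a
  T-equivariant isomorphism of the trivialised bundles (entries regular on U(\<sigma>), inverse too),
  compatible with the transition functions (checked on the dense torus T).\<close>
definition toric_bundle_iso :: "(real^'n::finite) set set \<Rightarrow> ('p, 'n, 'r::finite) tlms \<Rightarrow>
    ('p set \<Rightarrow> 'p set \<Rightarrow> complex) \<Rightarrow>
    ((real^'n) set \<Rightarrow> (real^'n) set \<Rightarrow> complex^'n \<Rightarrow> complex^'r^'r) \<Rightarrow>
    ('p set \<Rightarrow> 'p set \<Rightarrow> complex) \<Rightarrow>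
    ((real^'n) set \<Rightarrow> (real^'n) set \<Rightarrow> complex^'n \<Rightarrow> complex^'r^'r) \<Rightarrow> bool" where
  "toric_bundle_iso \<Sigma> L g Th g' Th' \<longleftrightarrow> (\<exists>\<Phi> \<Psi>. \<forall>\<sigma>\<in>cones_dim \<Sigma> (int CARD('n)).
      (\<forall>\<alpha> \<beta>. regular_on \<sigma> (\<lambda>t. \<Phi> \<sigma> t $ \<alpha> $ \<beta>) \<and> regular_on \<sigma> (\<lambda>t. \<Psi> \<sigma> t $ \<alpha> $ \<beta>)) \<and>
      (\<forall>t\<in>torus. \<Phi> \<sigma> t ** \<Psi> \<sigma> t = mat 1 \<and> \<Psi> \<sigma> t ** \<Phi> \<sigma> t = mat 1) \<and>
      (\<forall>s\<in>torus. \<forall>t\<in>torus. \<forall>\<alpha> \<beta>. \<Phi> \<sigma> (s * t) $ \<alpha> $ \<beta> =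
          zmon (slope L (lift L \<sigma> \<alpha>) - slope L (lift L \<sigma> \<beta>)) s * \<Phi> \<sigma> t $ \<alpha> $ \<beta>) \<and>
      (\<forall>\<sigma>2\<in>cones_dim \<Sigma> (int CARD('n)). \<forall>t\<in>torus.
          Gfull \<Sigma> L g Th \<sigma> \<sigma>2 t ** \<Phi> \<sigma>2 t = \<Phi> \<sigma> t ** Gfull \<Sigma> L g' Th' \<sigma> \<sigma>2 t))"

end

theory Submission
  imports Defs
begin

text \<open>
  An isomorphism of local systems is a family of constants \<open>h\<close>, nonzero on the maximal cones
  of \<open>L\<close>, with \<open>g' A B = h B * g A B / h A\<close>. Rescaling the frame element of \<open>\<E>\<^sub>\<sigma>\<close>
  belonging to the lift \<open>lift L \<sigma> \<alpha>\<close> by \<open>h (lift L \<sigma> \<alpha>)\<close> is a change of trivialisation by a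
  constant diagonal matrix \<open>D\<^sub>\<sigma>\<close>; it turns every transition matrix \<open>G\<close> from \<open>\<sigma>\<^sub>1\<close> to \<open>\<sigma>\<^sub>2\<close>
  into \<open>D\<^sub>\<sigma>\<^sub>1\<^sup>-\<^sup>1 G D\<^sub>\<sigma>\<^sub>2\<close>. On the semi-flat part this is exactly the relation between
  \<open>g\<close> and \<open>g'\<close>; a wall-crossing factor \<open>exp N\<^sub>\<tau>(\<omega>')\<close> conjugated by a diagonal matrix is
  again of that form, with rescaled constants; and conjugated products telescope, so the
  cocycle conditions persist. The matrices \<open>D\<^sub>\<sigma>\<close> have torus weight zero and give the
  isomorphism of toric bundles.

  The transition matrix between two arbitrary maximal cones is defined through a chain of
  maximal cones around their intersection \<open>\<tau>\<close>, so such chains have to exist. In a complete fan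
  one is read off from a segment joining the two interiors close to a relative interior point
  of \<open>\<tau>\<close>: it only meets cones containing \<open>\<tau>\<close>, and when chosen generically it misses all cones
  of codimension at least two, so it passes from one maximal cone to the next across walls.
\<close>

section \<open>Diagonal changes of frame\<close>

definition diag_mat :: "('r::finite \<Rightarrow> 'a::zero) \<Rightarrow> 'a^'r^'r" where
  "diag_mat a = (\<chi> i j. if i = j then a i else 0)"

definition diag_conj :: "('r::finite \<Rightarrow> 'a::field) \<Rightarrow> ('r \<Rightarrow> 'a) \<Rightarrow> 'a^'r^'r \<Rightarrow> 'a^'r^'r" where
  "diag_conj a b X = (\<chi> i j. inverse (a i) * X $ i $ j * b j)"

lemma diag_conj_nth [simp]: "diag_conj a b X $ i $ j = inverse (a i) * X $ i $ j * b j"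
  by (simp add: diag_conj_def)

lemma diag_conj_mult:
  assumes "\<forall>k. b k \<noteq> 0"
  shows "diag_conj a b X ** diag_conj b c Y = diag_conj a c (X ** Y)"
  using assms by (auto simp: vec_eq_iff matrix_matrix_mult_def sum_distrib_left sum_distrib_right
      intro!: sum.cong)

lemma diag_conj_mat_1:
  assumes "\<forall>k. a k \<noteq> 0"
  shows "diag_conj a a (mat 1) = mat 1"
  using assms by (simp add: vec_eq_iff mat_def)

lemma diag_mat_mult_nth: "(diag_mat a ** X) $ i $ j = a i * X $ i $ j"
  for X :: "'a::semiring_1^'r::finite^'r"
  by (simp add: matrix_matrix_mult_def diag_mat_def if_distrib if_distribR sum.delta cong: if_cong)

lemma mult_diag_mat_nth: "(X ** diag_mat a) $ i $ j = X $ i $ j * a j"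
  for X :: "'a::semiring_1^'r::finite^'r"
  by (simp add: matrix_matrix_mult_def diag_mat_def if_distrib if_distribR sum.delta' cong: if_cong)

lemma diag_mat_inverse:
  fixes a :: "'r::finite \<Rightarrow> 'a::field"
  assumes "\<forall>k. a k \<noteq> 0"
  shows "diag_mat a ** diag_mat (\<lambda>k. inverse (a k)) = mat 1"
  using assms by (simp add: vec_eq_iff diag_mat_mult_nth) (simp add: diag_mat_def mat_def)

lemma diag_mat_mult_diag_conj:
  assumes "\<forall>k. a k \<noteq> 0"
  shows "diag_mat a ** diag_conj a b X = X ** diag_mat b"
  using assms by (simp add: vec_eq_iff diag_mat_mult_nth mult_diag_mat_nth)

section \<open>The matrix exponential\<close>

lemma bounded_linear_diag_conj: "bounded_linear (diag_conj a b :: complex^'r::finite^'r \<Rightarrow> _)"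
  unfolding linear_conv_bounded_linear[symmetric]
  by (rule linearI) (simp_all add: vec_eq_iff algebra_simps scaleR_conv_of_real)

lemma bilinear_matrix_mult:
  "bilinear ((**) :: complex^'r::finite^'r \<Rightarrow> complex^'r^'r \<Rightarrow> complex^'r^'r)"
  unfolding bilinear_def
  by (auto intro!: linearI simp: vec_eq_iff matrix_matrix_mult_def sum.distrib algebra_simps
      scaleR_sum_right)

definition matpow :: "'a::semiring_1^'r^'r \<Rightarrow> nat \<Rightarrow> 'a^'r^'r" where
  "matpow A k = ((\<lambda>B. A ** B) ^^ k) (mat 1)"

lemma matpow_0 [simp]: "matpow A 0 = mat 1"
  and matpow_Suc [simp]: "matpow A (Suc k) = A ** matpow A k"
  by (simp_all add: matpow_def)

lemma matexp_matpow: "matexp A = (\<Sum>k. (1 / fact k) *\<^sub>R matpow A k)"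
  by (simp add: matexp_def matpow_def)

lemma norm_matpow_le:
  fixes A :: "complex^'r::finite^'r"
  assumes "\<forall>(X :: complex^'r^'r) (Y :: complex^'r^'r). norm (X ** Y) \<le> norm X * norm Y * K" "K \<ge> 0"
  shows "norm (matpow A k) \<le> (K * norm A) ^ k * norm (mat 1 :: complex^'r^'r)"
proof (induction k)
  case (Suc k)
  have "norm (matpow A (Suc k)) \<le> norm A * norm (matpow A k) * K"
    using assms(1) matpow_Suc by metis
  also have "\<dots> \<le> norm A * ((K * norm A) ^ k * norm (mat 1 :: complex^'r^'r)) * K"
    using Suc.IH assms(2) by (intro mult_right_mono mult_left_mono) auto
  finally show ?case by (simp add: mult_ac)
qed simp

lemma summable_matexp_series:
  fixes A :: "complex^'r::finite^'r"
  shows "summable (\<lambda>k. (1 / fact k) *\<^sub>R matpow A k)"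
proof -
  obtain K where K: "K \<ge> 0"
    "\<forall>(X :: complex^'r^'r) (Y :: complex^'r^'r). norm (X ** Y) \<le> norm X * norm Y * K"
    using bounded_bilinear.nonneg_bounded
      [OF bilinear_matrix_mult[unfolded bilinear_conv_bounded_bilinear]]
    by blast
  let ?c = "norm (mat 1 :: complex^'r^'r)"
  show ?thesis
  proof (rule summable_comparison_test')
    show "summable (\<lambda>k. inverse (fact k) * (K * norm A) ^ k * ?c)"
      by (intro summable_mult2 summable_exp)
    show "norm ((1 / fact k) *\<^sub>R matpow A k) \<le> inverse (fact k) * (K * norm A) ^ k * ?c" for k
      using norm_matpow_le[OF K(2,1)]
      by (auto simp: divide_inverse mult.assoc intro!: mult_left_mono)
  qed
qed

lemma matpow_diag_conj:
  assumes "\<forall>k. a k \<noteq> 0"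
  shows "matpow (diag_conj a a A) k = diag_conj a a (matpow A k)"
  by (induction k) (simp_all add: assms diag_conj_mat_1 diag_conj_mult)

lemma matexp_diag_conj:
  assumes "\<forall>k. a k \<noteq> 0"
  shows "matexp (diag_conj a a A) = diag_conj a a (matexp A)"
proof -
  have "diag_conj a a (matexp A) = (\<Sum>k. diag_conj a a ((1 / fact k) *\<^sub>R matpow A k))"
    unfolding matexp_matpow
    by (rule bounded_linear.suminf[OF bounded_linear_diag_conj summable_matexp_series])
  also have "\<dots> = (\<Sum>k. (1 / fact k) *\<^sub>R matpow (diag_conj a a A) k)"
    using assms
    by (simp add: matpow_diag_conj linear_cmul[OF bounded_linear.linear[OF bounded_linear_diag_conj]])
  finally show ?thesis by (simp add: matexp_matpow)
qed

section \<open>Closed covers and generic segments\<close>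

lemma interior_Union_closed_empty:
  assumes "finite \<F>" "\<And>C. C \<in> \<F> \<Longrightarrow> closed C" "\<And>C. C \<in> \<F> \<Longrightarrow> interior C = {}"
  shows "interior (\<Union>\<F>) = {}"
  using assms by (induction \<F> rule: finite_induct) (auto simp: interior_closed_Un_empty_interior)

lemma interior_empty_if_aff_dim_less:
  fixes S :: "'a::euclidean_space set"
  shows "aff_dim S < DIM('a) \<Longrightarrow> interior S = {}"
  using aff_dim_nonempty_interior by fastforce

lemma interior_nonempty_if_aff_dim_full:
  fixes S :: "'a::euclidean_space set"
  assumes "convex S" "S \<noteq> {}" "aff_dim S = DIM('a)"
  shows "interior S \<noteq> {}"
  using assms rel_interior_interior[of S] rel_interior_eq_empty[of S] aff_dim_eq_full[of S] by auto

lemma finite_closed_meeting_ball_contains_centre: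
  fixes p :: "'a::metric_space"
  assumes "finite \<F>" "\<And>C. C \<in> \<F> \<Longrightarrow> closed C"
  obtains \<delta> where "\<delta> > 0" "\<And>C. C \<in> \<F> \<Longrightarrow> C \<inter> ball p \<delta> \<noteq> {} \<Longrightarrow> p \<in> C"
proof -
  have "open (- \<Union>{C\<in>\<F>. p \<notin> C})"
    using assms by (intro open_Compl closed_Union) auto
  moreover have "p \<in> - \<Union>{C\<in>\<F>. p \<notin> C}" by blast
  ultimately obtain \<delta> where "\<delta> > 0" "ball p \<delta> \<subseteq> - \<Union>{C\<in>\<F>. p \<notin> C}"
    using open_contains_ball by blast
  then show ?thesis using that by blast
qed

lemma convex_interior_meets_ball:
  fixes S :: "'a::euclidean_space set"
  assumes "convex S" "interior S \<noteq> {}" "p \<in> S" "\<delta> > 0"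
  shows "interior S \<inter> ball p \<delta> \<noteq> {}"
proof -
  have "p \<in> closure (interior S)"
    using assms(1-3) convex_closure_interior closure_subset by blast
  then show ?thesis
    using closure_approachableD[OF _ assms(4)] by (fastforce simp: dist_commute)
qed

lemma segment_avoiding_low_dim_sets:
  fixes x :: "'a::euclidean_space"
  assumes "finite \<D>" "\<And>D. D \<in> \<D> \<Longrightarrow> aff_dim D + 1 < DIM('a)" "\<And>D. D \<in> \<D> \<Longrightarrow> x \<notin> D"
    and "open W" "W \<noteq> {}"
  obtains y where "y \<in> W" "\<And>D. D \<in> \<D> \<Longrightarrow> closed_segment x y \<inter> D = {}"
proof -
  let ?H = "(\<lambda>D. affine hull (insert x D)) ` \<D>"
  have "interior (\<Union>?H) = {}"
  proof (rule interior_Union_closed_empty)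
    fix H assume "H \<in> ?H"
    then obtain D where D: "D \<in> \<D>" "H = affine hull (insert x D)" by blast
    then show "closed H" by simp
    have "aff_dim (insert x D) \<le> aff_dim D + 1"
      by (simp add: aff_dim_insert)
    then show "interior H = {}"
      using assms(2)[OF D(1)] D(2) by (intro interior_empty_if_aff_dim_less) simp
  qed (use assms(1) in simp)
  then have "\<not> W \<subseteq> \<Union>?H"
    using assms(4,5) interior_maximal[of W "\<Union>?H"] by auto
  then obtain y where y: "y \<in> W" "y \<notin> \<Union>?H" by blast
  have "closed_segment x y \<inter> D = {}" if "D \<in> \<D>" for D
  proof (rule ccontr)
    assume "closed_segment x y \<inter> D \<noteq> {}"
    then obtain w where "w \<in> closed_segment x y" "w \<in> D" by blast
    then obtain u where u: "0 \<le> u" "u \<le> 1" "(1 - u) *\<^sub>R x + u *\<^sub>R y \<in> D"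
      unfolding in_segment by blast
    have "u \<noteq> 0" using u(3) assms(3)[OF that] by auto
    then have "y = (1 - 1 / u) *\<^sub>R x + (1 / u) *\<^sub>R ((1 - u) *\<^sub>R x + u *\<^sub>R y)"
      by (simp add: scaleR_add_right algebra_simps)
    also have "\<dots> \<in> affine hull (insert x D)"
      using u(3) by (intro mem_affine[OF affine_affine_hull] hull_inc) auto
    finally have "y \<in> \<Union>?H" using that by blast
    then show False using y(2) by contradiction
  qed
  then show ?thesis using that y(1) by blast
qed

lemma connected_finite_closed_cover_linked:
  assumes "connected S" "finite \<C>" "\<And>C. C \<in> \<C> \<Longrightarrow> closed C" "S \<subseteq> \<Union>\<C>"
    and "A \<in> \<C>" "A \<inter> S \<noteq> {}" "B \<in> \<C>" "B \<inter> S \<noteq> {}"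
  shows "(\<lambda>X Y. X \<in> \<C> \<and> Y \<in> \<C> \<and> X \<noteq> Y \<and> X \<inter> Y \<inter> S \<noteq> {})\<^sup>*\<^sup>* A B"
    (is "?E\<^sup>*\<^sup>* A B")
proof (rule ccontr)
  assume unlinked: "\<not> ?E\<^sup>*\<^sup>* A B"
  define R where "R = {X\<in>\<C>. ?E\<^sup>*\<^sup>* A X}"
  have "closed (\<Union>R)" "closed (\<Union>(\<C> - R))"
    using assms(2,3) by (auto simp: R_def)
  moreover have "S \<subseteq> \<Union>R \<union> \<Union>(\<C> - R)"
    using assms(4) by blast
  moreover have "\<Union>R \<inter> \<Union>(\<C> - R) \<inter> S = {}"
  proof -
    have "Y \<in> R" if "X \<in> R" "Y \<in> \<C>" "q \<in> X \<inter> Y \<inter> S" for X Y q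
      using that by (cases "X = Y") (auto simp: R_def intro: rtranclp.rtrancl_into_rtrancl)
    then show ?thesis by blast
  qed
  moreover have "\<Union>R \<inter> S \<noteq> {}" "\<Union>(\<C> - R) \<inter> S \<noteq> {}"
    using assms(5-8) unlinked by (auto simp: R_def)
  ultimately show False
    using assms(1) unfolding connected_closed by blast
qed

lemma rtranclp_imp_successively:
  assumes "R\<^sup>*\<^sup>* a b" "Q a" "\<And>x y. R x y \<Longrightarrow> Q y"
  obtains cs where "cs \<noteq> []" "hd cs = a" "last cs = b" "\<forall>x\<in>set cs. Q x" "successively R cs"
proof -
  from assms(1,2)
  have "\<exists>cs. cs \<noteq> [] \<and> hd cs = a \<and> last cs = b \<and> (\<forall>x\<in>set cs. Q x) \<and> successively R cs"
  proof (induction rule: converse_rtranclp_induct)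
    case base
    then show ?case by (intro exI[of _ "[b]"]) auto
  next
    case (step a' z)
    then obtain cs where "cs \<noteq> []" "hd cs = z" "last cs = b" "\<forall>x\<in>set cs. Q x" "successively R cs"
      using assms(3) by blast
    then show ?case
      using step by (intro exI[of _ "a' # cs"]) (auto simp: successively_Cons)
  qed
  then show ?thesis using that by blast
qed

section \<open>Cones of a fan and chains of maximal cones\<close>

lemma convex_cone_sum_scaleR:
  assumes "convex_cone S" "finite V" "\<forall>v\<in>V. 0 \<le> a v \<and> f v \<in> S"
  shows "(\<Sum>v\<in>V. a v *\<^sub>R f v) \<in> S"
  using assms(2,3)
proof (induction V rule: finite_induct)
  case empty
  then show ?case using assms(1) by (simp add: convex_cone_iff)
next
  case (insert w V)
  then show ?case using assms(1) by (simp add: convex_cone_add convex_cone_scaleR)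
qed

lemma cone_gen_eq_convex_cone_hull:
  assumes "finite V"
  shows "cone_gen V = convex_cone hull (rvec ` V)"
proof
  show "cone_gen V \<subseteq> convex_cone hull (rvec ` V)"
  proof
    fix x assume "x \<in> cone_gen V"
    then obtain a where "\<forall>v\<in>V. 0 \<le> a v" "x = (\<Sum>v\<in>V. a v *\<^sub>R rvec v)"
      unfolding cone_gen_def by blast
    then show "x \<in> convex_cone hull (rvec ` V)"
      using convex_cone_sum_scaleR[OF convex_cone_convex_cone_hull assms, of a rvec "rvec ` V"]
      by (simp add: hull_inc)
  qed
  have "convex_cone (cone_gen V)"
    unfolding convex_cone_iff
  proof (intro conjI ballI allI impI)
    show "0 \<in> cone_gen V"
      unfolding cone_gen_def by (auto intro!: exI[of _ "\<lambda>_. 0"])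
  next
    fix x y assume "x \<in> cone_gen V" "y \<in> cone_gen V"
    then obtain a b where "\<forall>v\<in>V. 0 \<le> a v" "x = (\<Sum>v\<in>V. a v *\<^sub>R rvec v)"
      "\<forall>v\<in>V. 0 \<le> b v" "y = (\<Sum>v\<in>V. b v *\<^sub>R rvec v)"
      unfolding cone_gen_def by blast
    then show "x + y \<in> cone_gen V"
      unfolding cone_gen_def
      by (auto intro!: exI[of _ "\<lambda>v. a v + b v"] simp: scaleR_add_left sum.distrib)
  next
    fix x and c :: real assume "x \<in> cone_gen V" "0 \<le> c"
    then obtain a where "\<forall>v\<in>V. 0 \<le> a v" "x = (\<Sum>v\<in>V. a v *\<^sub>R rvec v)"
      unfolding cone_gen_def by blast
    then show "c *\<^sub>R x \<in> cone_gen V"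
      unfolding cone_gen_def using \<open>0 \<le> c\<close>
      by (auto intro!: exI[of _ "\<lambda>v. c * a v"] simp: scaleR_sum_right)
  qed
  moreover have "rvec ` V \<subseteq> cone_gen V"
  proof
    fix x assume "x \<in> rvec ` V"
    then obtain w where "w \<in> V" "x = rvec w" by blast
    moreover have "(\<Sum>v\<in>V. (if v = w then 1 else 0) *\<^sub>R rvec v) = (\<Sum>v\<in>V. if v = w then rvec v else 0)"
      by (rule sum.cong) auto
    ultimately show "x \<in> cone_gen V"
      unfolding cone_gen_def using assms by (auto intro!: exI[of _ "\<lambda>v. if v = w then 1 else 0"])
  qed
  ultimately show "convex_cone hull (rvec ` V) \<subseteq> cone_gen V"
    by (rule hull_minimal[rotated])
qed

lemma fan_finite: "fan \<Sigma> \<Longrightarrow> finite \<Sigma>"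
  by (simp add: fan_def)

lemma fan_face_mem: "fan \<Sigma> \<Longrightarrow> \<sigma> \<in> \<Sigma> \<Longrightarrow> F face_of \<sigma> \<Longrightarrow> F \<noteq> {} \<Longrightarrow> F \<in> \<Sigma>"
  unfolding fan_def by blast

lemma fan_Int_face_of: "fan \<Sigma> \<Longrightarrow> \<sigma> \<in> \<Sigma> \<Longrightarrow> \<rho> \<in> \<Sigma> \<Longrightarrow> (\<sigma> \<inter> \<rho>) face_of \<sigma>"
  unfolding fan_def by blast

lemma fan_cone_eq_convex_cone_hull:
  assumes "fan \<Sigma>" "\<sigma> \<in> \<Sigma>"
  obtains V where "finite V" "\<sigma> = convex_cone hull V"
  using assms unfolding fan_def rat_poly_cone_def
  by (metis cone_gen_eq_convex_cone_hull finite_imageI)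

lemma fan_cone_closed: "fan \<Sigma> \<Longrightarrow> \<sigma> \<in> \<Sigma> \<Longrightarrow> closed \<sigma>"
  by (metis fan_cone_eq_convex_cone_hull closed_convex_cone_hull)

lemma fan_cone_convex: "fan \<Sigma> \<Longrightarrow> \<sigma> \<in> \<Sigma> \<Longrightarrow> convex \<sigma>"
  by (metis fan_cone_eq_convex_cone_hull convex_convex_cone_hull)

lemma fan_cone_zero: "fan \<Sigma> \<Longrightarrow> \<sigma> \<in> \<Sigma> \<Longrightarrow> 0 \<in> \<sigma>"
  by (metis fan_cone_eq_convex_cone_hull convex_cone_hull_contains_0)

lemma fan_rel_interior_subset:
  assumes "fan \<Sigma>" "\<sigma> \<in> \<Sigma>" "\<rho> \<in> \<Sigma>" "x \<in> rel_interior \<sigma>" "x \<in> \<rho>"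
  shows "\<sigma> \<subseteq> \<rho>"
proof (rule ccontr)
  assume "\<not> \<sigma> \<subseteq> \<rho>"
  moreover have "(\<sigma> \<inter> \<rho>) face_of \<sigma>"
    using fan_Int_face_of assms(1-3) by blast
  ultimately have "\<sigma> \<inter> \<rho> \<subseteq> rel_frontier \<sigma>"
    by (intro face_of_subset_rel_frontier) auto
  then show False
    using assms(4,5) rel_interior_subset by (auto simp: rel_frontier_def)
qed

lemma complete_fan_Union_maximal_cones:
  fixes \<Sigma> :: "(real^'n) set set"
  assumes "complete_fan \<Sigma>"
  shows "\<Union>(cones_dim \<Sigma> (int CARD('n))) = UNIV"
proof -
  let ?M = "cones_dim \<Sigma> (int CARD('n))"
  have fan: "fan \<Sigma>" and cover: "\<Union>\<Sigma> = UNIV"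
    using assms by (simp_all add: complete_fan_def)
  have "finite \<Sigma>"
    using fan by (rule fan_finite)
  then have closed: "closed (\<Union>?M)"
    using fan_cone_closed[OF fan] by (intro closed_Union) (auto simp: cones_dim_def)
  have "finite (\<Sigma> - ?M)"
    using \<open>finite \<Sigma>\<close> by simp
  have "interior C = {}" if "C \<in> \<Sigma> - ?M" for C
  proof -
    have "aff_dim C \<le> int CARD('n)" using aff_dim_le_DIM[of C] by simp
    with that show ?thesis
      by (intro interior_empty_if_aff_dim_less) (auto simp: cones_dim_def)
  qed
  then have "interior (\<Union>(\<Sigma> - ?M)) = {}"
    using \<open>finite (\<Sigma> - ?M)\<close> fan fan_cone_closed by (intro interior_Union_closed_empty) auto
  moreover have "\<Union>?M \<union> \<Union>(\<Sigma> - ?M) = UNIV"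
    using cover by (auto simp: cones_dim_def)
  ultimately have "interior (\<Union>?M) = UNIV"
    using interior_closed_Un_empty_interior[OF closed] by (metis interior_UNIV)
  then show ?thesis
    using interior_subset by blast
qed

lemma adjacent_sym: "adjacent \<Sigma> \<sigma>1 \<sigma>2 \<Longrightarrow> adjacent \<Sigma> \<sigma>2 \<sigma>1"
  unfolding adjacent_def by (simp add: Int_commute)

lemma adjacent_maximal: "adjacent \<Sigma> \<sigma>1 \<sigma>2 \<Longrightarrow> \<sigma>1 \<in> cones_dim \<Sigma> (int CARD('n))"
  for \<Sigma> :: "(real^'n::finite) set set"
  unfolding adjacent_def by blast

lemma fan_adjacent_if_meet_off_codim2:
  fixes \<Sigma> :: "(real^'n) set set"
  assumes "fan \<Sigma>" "A \<in> cones_dim \<Sigma> (int CARD('n))" "B \<in> cones_dim \<Sigma> (int CARD('n))" "A \<noteq> B"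
    and "x \<in> A \<inter> B" "\<And>\<rho>. \<rho> \<in> \<Sigma> \<Longrightarrow> aff_dim \<rho> \<le> int CARD('n) - 2 \<Longrightarrow> x \<notin> \<rho>"
  shows "adjacent \<Sigma> A B"
proof -
  have A: "A \<in> \<Sigma>" "aff_dim A = int CARD('n)" and B: "B \<in> \<Sigma>" "aff_dim B = int CARD('n)"
    using assms(2,3) by (auto simp: cones_dim_def)
  have faces: "(A \<inter> B) face_of A" "(A \<inter> B) face_of B"
    using fan_Int_face_of[OF assms(1)] A(1) B(1) by (metis Int_commute)+
  then have "A \<inter> B \<in> \<Sigma>"
    using fan_face_mem[OF assms(1) A(1)] assms(5) by blast
  then have "aff_dim (A \<inter> B) > int CARD('n) - 2"
    using assms(5,6) by force
  moreover have "aff_dim (A \<inter> B) < int CARD('n)"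
  proof (cases "A \<inter> B = A")
    case True
    then show ?thesis
      using face_of_aff_dim_lt[OF fan_cone_convex[OF assms(1) B(1)] faces(2)] assms(4) A(2) B(2)
      by auto
  next
    case False
    then show ?thesis
      using face_of_aff_dim_lt[OF fan_cone_convex[OF assms(1) A(1)] faces(1)] A(2) by auto
  qed
  ultimately show ?thesis
    using assms(2,3) unfolding adjacent_def by simp
qed

lemma is_chain_iff_successively:
  fixes \<Sigma> :: "(real^'n::finite) set set"
  shows "is_chain \<Sigma> \<omega> cs \<longleftrightarrow> cs \<noteq> [] \<and> (\<forall>\<sigma>\<in>set cs. \<sigma> \<in> cones_dim \<Sigma> (int CARD('n)) \<and> \<omega> \<subseteq> \<sigma>) \<and>
    successively (adjacent \<Sigma>) cs"
  by (simp add: is_chain_def successively_conv_nth)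

lemma fan_ball_meets_only_cones_containing:
  assumes "fan \<Sigma>" "\<tau> \<in> \<Sigma>"
  obtains p \<delta> where "p \<in> \<tau>" "\<delta> > 0" "\<And>\<rho>. \<rho> \<in> \<Sigma> \<Longrightarrow> \<rho> \<inter> ball p \<delta> \<noteq> {} \<Longrightarrow> \<tau> \<subseteq> \<rho>"
proof -
  obtain p where p: "p \<in> rel_interior \<tau>"
    using rel_interior_eq_empty fan_cone_convex[OF assms] fan_cone_zero[OF assms] by blast
  obtain \<delta> where \<delta>: "\<delta> > 0" "\<And>\<rho>. \<rho> \<in> \<Sigma> \<Longrightarrow> \<rho> \<inter> ball p \<delta> \<noteq> {} \<Longrightarrow> p \<in> \<rho>"
    using finite_closed_meeting_ball_contains_centre
      [OF fan_finite fan_cone_closed, OF assms(1) assms(1)]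
    by blast
  show ?thesis
  proof (rule that[OF _ \<delta>(1)])
    show "p \<in> \<tau>"
      using p rel_interior_subset by blast
  next
    fix \<rho> assume "\<rho> \<in> \<Sigma>" "\<rho> \<inter> ball p \<delta> \<noteq> {}"
    then show "\<tau> \<subseteq> \<rho>"
      using \<delta>(2) fan_rel_interior_subset[OF assms _ p] by blast
  qed
qed

lemma fan_generic_segment:
  fixes \<Sigma> :: "(real^'n) set set"
  assumes "fan \<Sigma>" "\<sigma>1 \<in> cones_dim \<Sigma> (int CARD('n))" "\<sigma>2 \<in> cones_dim \<Sigma> (int CARD('n))"
    and "p \<in> \<sigma>1 \<inter> \<sigma>2" "\<delta> > 0"
  obtains x y where "x \<in> \<sigma>1" "y \<in> \<sigma>2" "closed_segment x y \<subseteq> ball p \<delta>"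
    "\<And>\<rho>. \<rho> \<in> \<Sigma> \<Longrightarrow> aff_dim \<rho> \<le> int CARD('n) - 2 \<Longrightarrow> closed_segment x y \<inter> \<rho> = {}"
proof -
  let ?Low = "{\<rho>\<in>\<Sigma>. aff_dim \<rho> \<le> int CARD('n) - 2}"
  have M: "\<sigma> \<in> \<Sigma>" "aff_dim \<sigma> = int CARD('n)" if "\<sigma> \<in> {\<sigma>1, \<sigma>2}" for \<sigma>
    using that assms(2,3) by (auto simp: cones_dim_def)
  have int_ball: "interior \<sigma> \<inter> ball p \<delta> \<noteq> {}" if "\<sigma> \<in> {\<sigma>1, \<sigma>2}" for \<sigma>
  proof -
    have "\<sigma> \<in> \<Sigma>" "aff_dim \<sigma> = int CARD('n)" "p \<in> \<sigma>"
      using that M assms(4) by auto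
    then show ?thesis
      using fan_cone_convex[OF assms(1)] fan_cone_zero[OF assms(1)] assms(5)
      by (intro convex_interior_meets_ball interior_nonempty_if_aff_dim_full) auto
  qed
  then obtain x where x: "x \<in> interior \<sigma>1" "x \<in> ball p \<delta>" by blast
  have x_Low: "x \<notin> \<rho>" if "\<rho> \<in> ?Low" for \<rho>
  proof
    assume "x \<in> \<rho>"
    moreover have "x \<in> rel_interior \<sigma>1"
      using x(1) interior_subset_rel_interior by blast
    ultimately have "\<sigma>1 \<subseteq> \<rho>"
      using fan_rel_interior_subset[OF assms(1) M(1)[OF insertI1]] that by blast
    then show False
      using aff_dim_subset[of \<sigma>1 \<rho>] that M(2)[OF insertI1] by auto
  qed
  have Low_dim: "aff_dim \<rho> + 1 < DIM(real^'n)" if "\<rho> \<in> ?Low" for \<rho>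
    using that by simp
  obtain y where y: "y \<in> interior \<sigma>2 \<inter> ball p \<delta>"
    and y_Low: "\<And>\<rho>. \<rho> \<in> ?Low \<Longrightarrow> closed_segment x y \<inter> \<rho> = {}"
    by (rule segment_avoiding_low_dim_sets[of ?Low x "interior \<sigma>2 \<inter> ball p \<delta>"])
      (use fan_finite[OF assms(1)] Low_dim x_Low int_ball in auto)
  have "closed_segment x y \<subseteq> ball p \<delta>"
    using x(2) y by (intro closed_segment_subset) auto
  moreover have "x \<in> \<sigma>1" "y \<in> \<sigma>2"
    using x(1) y interior_subset by blast+
  ultimately show ?thesis
    using that y_Low by simp
qed

lemma complete_fan_chain_exists:
  fixes \<Sigma> :: "(real^'n) set set"
  assumes "complete_fan \<Sigma>" "\<sigma>1 \<in> cones_dim \<Sigma> (int CARD('n))" "\<sigma>2 \<in> cones_dim \<Sigma> (int CARD('n))"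
  obtains cs where "is_chain \<Sigma> (\<sigma>1 \<inter> \<sigma>2) cs" "hd cs = \<sigma>1" "last cs = \<sigma>2"
proof -
  let ?M = "cones_dim \<Sigma> (int CARD('n))"
  have fan: "fan \<Sigma>"
    using assms(1) by (simp add: complete_fan_def)
  have M: "\<sigma> \<in> \<Sigma>" if "\<sigma> \<in> ?M" for \<sigma>
    using that by (simp add: cones_dim_def)
  have "(\<sigma>1 \<inter> \<sigma>2) face_of \<sigma>1" "0 \<in> \<sigma>1 \<inter> \<sigma>2"
    using fan_Int_face_of[OF fan] fan_cone_zero[OF fan] M assms(2,3) by blast+
  then have "\<sigma>1 \<inter> \<sigma>2 \<in> \<Sigma>"
    using fan_face_mem[OF fan M[OF assms(2)]] by blast
  then obtain p \<delta> where p: "p \<in> \<sigma>1 \<inter> \<sigma>2" "\<delta> > 0"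
    and near: "\<And>\<rho>. \<rho> \<in> \<Sigma> \<Longrightarrow> \<rho> \<inter> ball p \<delta> \<noteq> {} \<Longrightarrow> \<sigma>1 \<inter> \<sigma>2 \<subseteq> \<rho>"
    using fan_ball_meets_only_cones_containing[OF fan] by blast
  obtain x y where xy: "x \<in> \<sigma>1" "y \<in> \<sigma>2" and S_ball: "closed_segment x y \<subseteq> ball p \<delta>"
    and S_Low: "\<And>\<rho>. \<rho> \<in> \<Sigma> \<Longrightarrow> aff_dim \<rho> \<le> int CARD('n) - 2 \<Longrightarrow> closed_segment x y \<inter> \<rho> = {}"
    using fan_generic_segment[OF fan assms(2,3) p] by blast
  let ?S = "closed_segment x y"
  let ?E = "\<lambda>X Y. X \<in> ?M \<and> Y \<in> ?M \<and> X \<noteq> Y \<and> X \<inter> Y \<inter> ?S \<noteq> {}"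
  have "?E\<^sup>*\<^sup>* \<sigma>1 \<sigma>2"
  proof (rule connected_finite_closed_cover_linked)
    show "finite ?M" using fan_finite[OF fan] by (simp add: cones_dim_def)
    show "?S \<subseteq> \<Union>?M" using complete_fan_Union_maximal_cones[OF assms(1)] by blast
  qed (use assms(2,3) xy fan_cone_closed[OF fan] M in auto)
  then obtain cs where cs: "cs \<noteq> []" "hd cs = \<sigma>1" "last cs = \<sigma>2"
    "\<forall>X\<in>set cs. X \<in> ?M \<and> X \<inter> ?S \<noteq> {}" "successively ?E cs"
    by (rule rtranclp_imp_successively[where Q = "\<lambda>X. X \<in> ?M \<and> X \<inter> ?S \<noteq> {}"])
      (use assms(2) xy in auto)
  have "successively (adjacent \<Sigma>) cs"
    using cs(5) by (rule successively_mono)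
      (use fan_adjacent_if_meet_off_codim2[OF fan] S_Low in blast)
  moreover have "\<forall>X\<in>set cs. X \<in> ?M \<and> \<sigma>1 \<inter> \<sigma>2 \<subseteq> X"
    using cs(4) S_ball near M by blast
  ultimately show ?thesis
    using that cs(1-3) by (simp add: is_chain_iff_successively)
qed

section \<open>Transporting the wall-crossing data\<close>

lemma regular_on_const: "regular_on \<sigma> (\<lambda>t. c)"
  unfolding regular_on_def
  by (intro exI[of _ "{0}"] exI[of _ "\<lambda>_. c"]) (simp add: dualM_def pairing_def zmon_def)

lemma Nmat_diag_conj:
  "diag_conj a a (Nmat L \<sigma> \<tau> \<omega> c t) = Nmat L \<sigma> \<tau> \<omega> (\<lambda>\<alpha> \<beta>. inverse (a \<alpha>) * c \<alpha> \<beta> * a \<beta>) t"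
  by (simp add: vec_eq_iff Nmat_def)

lemma foldr_matexp_diag_conj:
  assumes "\<forall>k. a k \<noteq> 0"
  shows "diag_conj a a (foldr (\<lambda>\<omega> X. matexp (N \<omega>) ** X) ws (mat 1)) =
    foldr (\<lambda>\<omega> X. matexp (diag_conj a a (N \<omega>)) ** X) ws (mat 1)"
proof (induction ws)
  case (Cons w ws)
  then show ?case
    by (simp add: diag_conj_mult[OF assms, symmetric] matexp_diag_conj[OF assms])
qed (simp add: assms diag_conj_mat_1)

lemma wall_aut_diag_conj:
  assumes "\<forall>k. a k \<noteq> 0" "wall_aut L \<sigma>1 \<sigma>2 F"
  shows "wall_aut L \<sigma>1 \<sigma>2 (\<lambda>t. diag_conj a a (F t))"
proof -
  obtain ws c where ws: "distinct ws" "set ws = Sset L \<sigma>1 (\<sigma>1 \<inter> \<sigma>2)"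
    and F: "\<forall>t\<in>torus. F t = foldr (\<lambda>\<omega> X. matexp (Nmat L \<sigma>1 (\<sigma>1 \<inter> \<sigma>2) \<omega> (c \<omega>) t) ** X) ws (mat 1)"
    using assms(2) unfolding wall_aut_def by blast
  let ?c = "\<lambda>\<omega> \<alpha> \<beta>. inverse (a \<alpha>) * c \<omega> \<alpha> \<beta> * a \<beta>"
  have "\<forall>t\<in>torus. diag_conj a a (F t) =
      foldr (\<lambda>\<omega> X. matexp (Nmat L \<sigma>1 (\<sigma>1 \<inter> \<sigma>2) \<omega> (?c \<omega>) t) ** X) ws (mat 1)"
    using F by (simp add: foldr_matexp_diag_conj[OF assms(1)] Nmat_diag_conj)
  then show ?thesis
    unfolding wall_aut_def using ws by (intro exI[of _ ws] exI[of _ ?c]) simp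
qed

lemma chainG_diag_conj:
  assumes "\<forall>\<sigma>\<in>set cs. \<forall>k. d \<sigma> k \<noteq> 0" "cs \<noteq> []"
    and "successively (\<lambda>\<sigma>1 \<sigma>2. G' \<sigma>1 \<sigma>2 t = diag_conj (d \<sigma>1) (d \<sigma>2) (G \<sigma>1 \<sigma>2 t)) cs"
  shows "chainG G' cs t = diag_conj (d (hd cs)) (d (last cs)) (chainG G cs t)"
  using assms
  by (induction cs rule: induct_list012) (auto simp: diag_conj_mat_1 diag_conj_mult)

lemma chainG_diag_conj_is_chain:
  fixes \<Sigma> :: "(real^'n::finite) set set"
  assumes "is_chain \<Sigma> \<omega> cs" "\<And>\<sigma> k. \<sigma> \<in> cones_dim \<Sigma> (int CARD('n)) \<Longrightarrow> d \<sigma> k \<noteq> 0"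
    and "\<And>\<sigma>1 \<sigma>2. adjacent \<Sigma> \<sigma>1 \<sigma>2 \<Longrightarrow> G' \<sigma>1 \<sigma>2 t = diag_conj (d \<sigma>1) (d \<sigma>2) (G \<sigma>1 \<sigma>2 t)"
  shows "chainG G' cs t = diag_conj (d (hd cs)) (d (last cs)) (chainG G cs t)"
proof (rule chainG_diag_conj)
  show "successively (\<lambda>\<sigma>1 \<sigma>2. G' \<sigma>1 \<sigma>2 t = diag_conj (d \<sigma>1) (d \<sigma>2) (G \<sigma>1 \<sigma>2 t)) cs"
    using assms(1) by (auto simp: is_chain_iff_successively intro: successively_mono assms(3))
qed (use assms(1,2) in \<open>auto simp: is_chain_iff_successively\<close>)

lemma consistent_diag_conj:
  fixes \<Sigma> :: "(real^'n::finite) set set"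
  assumes "consistent \<Sigma> L g Th"
    and d: "\<And>\<sigma> k. \<sigma> \<in> cones_dim \<Sigma> (int CARD('n)) \<Longrightarrow> d \<sigma> k \<noteq> 0"
    and Th': "\<And>\<sigma>1 \<sigma>2. Th' \<sigma>1 \<sigma>2 = (\<lambda>t. diag_conj (d \<sigma>1) (d \<sigma>1) (Th \<sigma>1 \<sigma>2 t))"
    and G': "\<And>\<sigma>1 \<sigma>2 t. adjacent \<Sigma> \<sigma>1 \<sigma>2 \<Longrightarrow>
      Gmat L g' Th' \<sigma>1 \<sigma>2 t = diag_conj (d \<sigma>1) (d \<sigma>2) (Gmat L g Th \<sigma>1 \<sigma>2 t)"
  shows "consistent \<Sigma> L g' Th'"
  unfolding consistent_def wall_collection_def
proof (intro conjI allI impI ballI)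
  fix \<sigma>1 \<sigma>2 assume adj: "adjacent \<Sigma> \<sigma>1 \<sigma>2"
  have d1: "\<forall>k. d \<sigma>1 k \<noteq> 0" and d2: "\<forall>k. d \<sigma>2 k \<noteq> 0"
    using d adjacent_maximal adjacent_sym adj by blast+
  have "wall_aut L \<sigma>1 \<sigma>2 (Th \<sigma>1 \<sigma>2) \<or> wall_aut L \<sigma>2 \<sigma>1 (Th \<sigma>2 \<sigma>1)"
    using assms(1) adj unfolding consistent_def wall_collection_def by blast
  then show "wall_aut L \<sigma>1 \<sigma>2 (Th' \<sigma>1 \<sigma>2) \<or> wall_aut L \<sigma>2 \<sigma>1 (Th' \<sigma>2 \<sigma>1)"
    unfolding Th' using wall_aut_diag_conj d1 d2 by blast
  fix t :: "complex^'n" assume "t \<in> torus"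
  then have "Gmat L g Th \<sigma>1 \<sigma>2 t ** Gmat L g Th \<sigma>2 \<sigma>1 t = mat 1"
    using assms(1) adj unfolding consistent_def wall_collection_def by blast
  then show "Gmat L g' Th' \<sigma>1 \<sigma>2 t ** Gmat L g' Th' \<sigma>2 \<sigma>1 t = mat 1"
    using G'[OF adj] G'[OF adjacent_sym[OF adj]] d1 d2 by (simp add: diag_conj_mult diag_conj_mat_1)
next
  fix \<omega> cs and t :: "complex^'n"
  assume \<omega>: "\<omega> \<in> \<Sigma>" and cycle: "is_chain \<Sigma> \<omega> cs \<and> hd cs = last cs" and "t \<in> torus"
  then have "chainG (Gmat L g Th) cs t = mat 1"
    using assms(1) unfolding consistent_def by blast
  moreover have "\<forall>k. d (hd cs) k \<noteq> 0"
    using cycle d unfolding is_chain_def by auto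
  ultimately show "chainG (Gmat L g' Th') cs t = mat 1"
    using chainG_diag_conj_is_chain[of \<Sigma> \<omega> cs d "Gmat L g' Th'" t "Gmat L g Th"] cycle d G'
    by (simp add: diag_conj_mat_1)
qed

lemma Gfull_diag_conj:
  fixes \<Sigma> :: "(real^'n::finite) set set"
  assumes "complete_fan \<Sigma>" "\<sigma>1 \<in> cones_dim \<Sigma> (int CARD('n))" "\<sigma>2 \<in> cones_dim \<Sigma> (int CARD('n))"
    and "\<And>\<sigma> k. \<sigma> \<in> cones_dim \<Sigma> (int CARD('n)) \<Longrightarrow> d \<sigma> k \<noteq> 0"
    and "\<And>\<sigma>1 \<sigma>2. adjacent \<Sigma> \<sigma>1 \<sigma>2 \<Longrightarrow>
      Gmat L g' Th' \<sigma>1 \<sigma>2 t = diag_conj (d \<sigma>1) (d \<sigma>2) (Gmat L g Th \<sigma>1 \<sigma>2 t)"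
  shows "Gfull \<Sigma> L g' Th' \<sigma>1 \<sigma>2 t = diag_conj (d \<sigma>1) (d \<sigma>2) (Gfull \<Sigma> L g Th \<sigma>1 \<sigma>2 t)"
proof -
  let ?chain = "\<lambda>cs. is_chain \<Sigma> (\<sigma>1 \<inter> \<sigma>2) cs \<and> hd cs = \<sigma>1 \<and> last cs = \<sigma>2"
  obtain cs where "?chain cs"
    using complete_fan_chain_exists[OF assms(1-3)] by blast
  then have "?chain (SOME cs. ?chain cs)"
    by (rule someI)
  then show ?thesis
    unfolding Gfull_def
    using chainG_diag_conj_is_chain
      [of \<Sigma> "\<sigma>1 \<inter> \<sigma>2" "SOME cs. ?chain cs" d "Gmat L g' Th'" t "Gmat L g Th"] assms(4,5)
    by simp
qed

lemma toric_bundle_iso_diag_mat: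
  fixes \<Sigma> :: "(real^'n::finite) set set"
  assumes "complete_fan \<Sigma>"
    and d: "\<And>\<sigma> k. \<sigma> \<in> cones_dim \<Sigma> (int CARD('n)) \<Longrightarrow> d \<sigma> k \<noteq> 0"
    and "\<And>\<sigma>1 \<sigma>2 t. adjacent \<Sigma> \<sigma>1 \<sigma>2 \<Longrightarrow>
      Gmat L g' Th' \<sigma>1 \<sigma>2 t = diag_conj (d \<sigma>1) (d \<sigma>2) (Gmat L g Th \<sigma>1 \<sigma>2 t)"
  shows "toric_bundle_iso \<Sigma> L g Th g' Th'"
  unfolding toric_bundle_iso_def
proof (rule exI[of _ "\<lambda>\<sigma> t. diag_mat (d \<sigma>)"], rule exI[of _ "\<lambda>\<sigma> t. diag_mat (\<lambda>k. inverse (d \<sigma> k))"],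
    intro ballI conjI allI)
  fix \<sigma> \<sigma>2 and t :: "complex^'n"
  assume \<sigma>: "\<sigma> \<in> cones_dim \<Sigma> (int CARD('n))" and \<sigma>2: "\<sigma>2 \<in> cones_dim \<Sigma> (int CARD('n))"
  have "Gfull \<Sigma> L g' Th' \<sigma> \<sigma>2 t = diag_conj (d \<sigma>) (d \<sigma>2) (Gfull \<Sigma> L g Th \<sigma> \<sigma>2 t)"
    by (rule Gfull_diag_conj[OF assms(1) \<sigma> \<sigma>2 d assms(3)])
  moreover have "\<forall>k. d \<sigma> k \<noteq> 0"
    using d \<sigma> by blast
  ultimately show
    "Gfull \<Sigma> L g Th \<sigma> \<sigma>2 t ** diag_mat (d \<sigma>2) = diag_mat (d \<sigma>) ** Gfull \<Sigma> L g' Th' \<sigma> \<sigma>2 t"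
    by (simp add: diag_mat_mult_diag_conj)
next
  fix \<sigma> and t :: "complex^'n" assume "\<sigma> \<in> cones_dim \<Sigma> (int CARD('n))"
  then have "\<forall>k. d \<sigma> k \<noteq> 0" using d by blast
  then show "diag_mat (d \<sigma>) ** diag_mat (\<lambda>k. inverse (d \<sigma> k)) = mat 1"
    and "diag_mat (\<lambda>k. inverse (d \<sigma> k)) ** diag_mat (d \<sigma>) = mat 1"
    using diag_mat_inverse[of "\<lambda>k. inverse (d \<sigma> k)"] by (simp_all add: diag_mat_inverse)
qed (simp_all add: regular_on_const diag_mat_def zmon_def)

text \<open>No hypothesis \<open>h A \<noteq> 0\<close> is needed, since \<open>x / 0 = 0 = inverse 0 * x\<close>.\<close>

lemma Gsf_iso_loc_sys:
  assumes "unique_adjacent_lifts \<Sigma> L" "adjacent \<Sigma> \<sigma>1 \<sigma>2"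
    and "\<And>A B. adjL \<Sigma> L A B \<Longrightarrow> g' A B = h B * g A B / h A"
  shows "Gsf L g' \<sigma>1 \<sigma>2 t = diag_conj (\<lambda>\<alpha>. h (lift L \<sigma>1 \<alpha>)) (\<lambda>\<beta>. h (lift L \<sigma>2 \<beta>)) (Gsf L g \<sigma>1 \<sigma>2 t)"
proof -
  have "adjL \<Sigma> L (lift L \<sigma>1 \<alpha>) (lift L \<sigma>2 (adjl L \<sigma>1 \<sigma>2 \<alpha>))" for \<alpha>
    using assms(1,2) unfolding unique_adjacent_lifts_def by blast
  then show ?thesis
    using assms(3) by (simp add: vec_eq_iff Gsf_def divide_inverse mult_ac)
qed

lemma tropical_lagrangian_multisection_lift:
  fixes \<Sigma> :: "(real^'n::finite) set set"
  assumes "tropical_lagrangian_multisection \<Sigma> L" "\<sigma> \<in> cones_dim \<Sigma> (int CARD('n))"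
  shows "lift L \<sigma> \<alpha> \<in> maxcones L"
  using assms unfolding tropical_lagrangian_multisection_def by blast

theorem proposition4p19:
  fixes \<Sigma> :: "(real^'n::finite) set set"
    and L :: "('p, 'n, 'r::finite) tlms"
    and g g' :: "'p set \<Rightarrow> 'p set \<Rightarrow> complex"
    and Th :: "(real^'n) set \<Rightarrow> (real^'n) set \<Rightarrow> complex^'n \<Rightarrow> complex^'r^'r"
  assumes "tropical_lagrangian_multisection \<Sigma> L"
    and "unique_adjacent_lifts \<Sigma> L"
    and "loc_sys \<Sigma> L g"
    and "consistent \<Sigma> L g Th"
    and "loc_sys \<Sigma> L g'"
    and "iso_loc_sys \<Sigma> L g g'"
  shows "\<exists>Th'. consistent \<Sigma> L g' Th' \<and> toric_bundle_iso \<Sigma> L g Th g' Th'"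
proof -
  obtain h where h_nonzero: "\<forall>A\<in>maxcones L. h A \<noteq> 0"
    and h: "\<forall>A B. adjL \<Sigma> L A B \<longrightarrow> g' A B = h B * g A B / h A"
    using assms(6) unfolding iso_loc_sys_def by blast
  define d where "d = (\<lambda>\<sigma> \<alpha>. h (lift L \<sigma> \<alpha>))"
  define Th' where "Th' = (\<lambda>\<sigma>1 \<sigma>2 t. diag_conj (d \<sigma>1) (d \<sigma>1) (Th \<sigma>1 \<sigma>2 t))"
  have d_nonzero: "d \<sigma> k \<noteq> 0" if "\<sigma> \<in> cones_dim \<Sigma> (int CARD('n))" for \<sigma> k
    using h_nonzero tropical_lagrangian_multisection_lift[OF assms(1) that] by (simp add: d_def)
  have G': "Gmat L g' Th' \<sigma>1 \<sigma>2 t = diag_conj (d \<sigma>1) (d \<sigma>2) (Gmat L g Th \<sigma>1 \<sigma>2 t)"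
    if adj: "adjacent \<Sigma> \<sigma>1 \<sigma>2" for \<sigma>1 \<sigma>2 t
  proof -
    have "Gsf L g' \<sigma>1 \<sigma>2 t = diag_conj (d \<sigma>1) (d \<sigma>2) (Gsf L g \<sigma>1 \<sigma>2 t)"
      using Gsf_iso_loc_sys[OF assms(2) adj] h by (simp add: d_def)
    then show ?thesis
      using d_nonzero[OF adjacent_maximal[OF adj]] by (simp add: Gmat_def Th'_def diag_conj_mult)
  qed
  have "complete_fan \<Sigma>"
    using assms(1) unfolding tropical_lagrangian_multisection_def by blast
  then have "toric_bundle_iso \<Sigma> L g Th g' Th'"
    using toric_bundle_iso_diag_mat d_nonzero G' by blast
  moreover have "consistent \<Sigma> L g' Th'"
    using consistent_diag_conj[OF assms(4) d_nonzero _ G'] by (simp add: Th'_def)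
  ultimately show ?thesis by blast
qed

end
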